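(* Let $p$ be a prime, $m,e$ positive integers and $b\ge2$ an integer with $b<p^e$. Then $b+1\leq d_b(\mathcal{C}_i)\leq 2b$ for every $1\leq i\leq p^{e-1}$.
   Context: For $0\le i\le p^e$, $\mathcal{C}_i$ denotes the cyclic code $\langle (x-1)^i\rangle\subseteq \mathbb{F}_{p^m}[x]/\langle x^{p^e}-1\rangle$, with polynomials identified with their coefficient vectors in $\mathbb{F}_{p^m}^{p^e}$. For $c\in\mathbb{F}_{p^m}^{n}$, $\pi_b(c)$ is the list of the $n$ cyclically consecutive $b$-tuples $(c_j,\dots,c_{j+b-1})$ (indices mod $n$), $d_b(c,c')=d_H(\pi_b(c),\pi_b(c'))$, and $d_b(\mathcal{C})$ is the minimum of $d_b(c,c')$ over distinct $c,c'\in\mathcal{C}$. *)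

theory Defs
  imports "HOL-Computational_Algebra.Polynomial" "HOL-Library.Cardinality"
begin

text \<open>The cyclic code C_i = ideal generated by (x-1)^i in F[x]/(x^n-1), where the
  residue classes are represented by their reduced representatives (degree < n).\<close>
definition cyclic_code_poly :: "nat \<Rightarrow> nat \<Rightarrow> 'a::field poly set" where
  "cyclic_code_poly n i = {([:-1, 1:] ^ i * g) mod (monom 1 n - 1) | g. True}"

definition coeff_vec :: "nat \<Rightarrow> 'a::zero poly \<Rightarrow> nat \<Rightarrow> 'a" where
  "coeff_vec n c = (\<lambda>j. if j < n then coeff c j else 0)"

definition cyclic_code :: "nat \<Rightarrow> nat \<Rightarrow> (nat \<Rightarrow> 'a::field) set" where
  "cyclic_code n i = coeff_vec n ` cyclic_code_poly n i"

definition pi_b :: "nat \<Rightarrow> nat \<Rightarrow> (nat \<Rightarrow> 'a) \<Rightarrow> nat \<Rightarrow> 'a list" where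
  "pi_b n b c = (\<lambda>j. map (\<lambda>k. c ((j + k) mod n)) [0..<b])"

definition hamming_dist :: "nat \<Rightarrow> (nat \<Rightarrow> 'b) \<Rightarrow> (nat \<Rightarrow> 'b) \<Rightarrow> nat" where
  "hamming_dist n u v = card {j. j < n \<and> u j \<noteq> v j}"

definition d_b :: "nat \<Rightarrow> nat \<Rightarrow> (nat \<Rightarrow> 'a) \<Rightarrow> (nat \<Rightarrow> 'a) \<Rightarrow> nat" where
  "d_b n b c c' = hamming_dist n (pi_b n b c) (pi_b n b c')"

definition min_d_b :: "nat \<Rightarrow> nat \<Rightarrow> (nat \<Rightarrow> 'a) set \<Rightarrow> nat" where
  "min_d_b n b C = Min {d_b n b c c' | c c'. c \<in> C \<and> c' \<in> C \<and> c \<noteq> c'}"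

end

theory Submission
  imports Defs "HOL-Number_Theory.Residues"
begin

text \<open>
  The b-symbol read vector of a difference with support of size w has at most b w nonzero
  entries, and at least b + 1 as soon as w \<ge> 2: the b windows covering one support position
  are distinct, and one further window covers the other.  Every codeword of C_i, i \<ge> 1, is
  divisible by x - 1, so its coefficients sum to zero and distinct codewords differ in at least
  two positions.  Conversely, in characteristic p we have x^q - 1 = (x - 1)^q for q = p^(e-1),
  so for i \<le> q the weight-two word x^q - 1 lies in C_i.
\<close>

hide_const (open) UnivPoly.coeff UnivPoly.monom UnivPoly.deg

definition window_start :: "nat \<Rightarrow> nat \<Rightarrow> nat \<Rightarrow> nat" where
  "window_start n t k = (t + n - k) mod n"

lemma window_start_less: "0 < n \<Longrightarrow> window_start n t k < n"
  unfolding window_start_def by simp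

lemma window_start_covers:
  assumes "t < n" "k \<le> n"
  shows "(window_start n t k + k) mod n = t"
proof -
  have "(window_start n t k + k) mod n = (t + n - k + k) mod n"
    unfolding window_start_def by (simp add: mod_add_left_eq)
  also have "\<dots> = t" using assms by simp
  finally show ?thesis .
qed

lemma window_start_unique:
  assumes "j < n" "k \<le> n" "(j + k) mod n = t"
  shows "window_start n t k = j"
proof -
  have "window_start n t k = ((j + k) mod n + (n - k)) mod n"
    unfolding window_start_def using assms(2,3) by simp
  also have "\<dots> = (j + k + (n - k)) mod n" by (simp add: mod_add_left_eq)
  also have "\<dots> = j" using assms(1,2) by simp
  finally show ?thesis .
qed

lemma inj_on_window_start:
  assumes "t < n" "b < n"
  shows "inj_on (window_start n t) {..b}"
proof
  fix k1 k2 assume k: "k1 \<in> {..b}" "k2 \<in> {..b}" "window_start n t k1 = window_start n t k2"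
  then have "(window_start n t k1 + k1) mod n = (window_start n t k1 + k2) mod n"
    using window_start_covers assms by (metis atMost_iff le_trans less_imp_le)
  then show "k1 = k2"
    using cong_add_lcancel_nat[of "window_start n t k1" k1 k2 n] k assms
    by (simp add: cong_def)
qed

lemma d_b_eq_card_windows:
  "d_b n b c c' = card {j. j < n \<and> (\<exists>k<b. c ((j + k) mod n) \<noteq> c' ((j + k) mod n))}"
  unfolding d_b_def hamming_dist_def pi_b_def
  by (auto simp: map_eq_conv intro!: arg_cong[where f = card])

lemma d_b_le: "d_b n b c c' \<le> n"
  unfolding d_b_eq_card_windows by (rule order.trans[OF card_mono[of "{..<n}"]]) auto

lemma d_b_le_mult_hamming_dist:
  assumes "b \<le> n"
  shows "d_b n b c c' \<le> b * hamming_dist n c c'"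
proof -
  define S where "S = {t. t < n \<and> c t \<noteq> c' t}"
  let ?W = "{j. j < n \<and> (\<exists>k<b. c ((j + k) mod n) \<noteq> c' ((j + k) mod n))}"
  have "?W \<subseteq> (\<lambda>(t, k). window_start n t k) ` (S \<times> {..<b})"
  proof
    fix j assume "j \<in> ?W"
    then obtain k where k: "j < n" "k < b" "c ((j + k) mod n) \<noteq> c' ((j + k) mod n)" by auto
    then have "((j + k) mod n, k) \<in> S \<times> {..<b}" unfolding S_def by simp
    moreover have "window_start n ((j + k) mod n) k = j"
      using k assms by (intro window_start_unique) auto
    ultimately show "j \<in> (\<lambda>(t, k). window_start n t k) ` (S \<times> {..<b})" by force
  qed
  then have "card ?W \<le> card ((\<lambda>(t, k). window_start n t k) ` (S \<times> {..<b}))"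
    unfolding S_def by (intro card_mono) auto
  also have "\<dots> \<le> card (S \<times> {..<b})"
    by (rule card_image_le) (simp add: S_def)
  also have "\<dots> = b * hamming_dist n c c'"
    unfolding hamming_dist_def S_def by (simp add: card_cartesian_product)
  finally show ?thesis unfolding d_b_eq_card_windows .
qed

lemma d_b_ge_Suc:
  assumes "1 \<le> b" "b < n" "2 \<le> hamming_dist n c c'"
  shows "b + 1 \<le> d_b n b c c'"
proof -
  obtain t1 t2 where t: "t1 < n" "t2 < n" "t1 \<noteq> t2" "c t1 \<noteq> c' t1" "c t2 \<noteq> c' t2"
    using assms(3) card_le_Suc0_iff_eq[of "{t. t < n \<and> c t \<noteq> c' t}"]
    unfolding hamming_dist_def by force
  define W where "W = {j. j < n \<and> (\<exists>k<b. c ((j + k) mod n) \<noteq> c' ((j + k) mod n))}"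
  have "finite W" unfolding W_def by simp
  define A where "A = window_start n t2 ` {..<b}"
  have A_sub: "A \<subseteq> W"
    unfolding A_def W_def using t assms window_start_less window_start_covers by fastforce
  have card_A: "card A = b"
    unfolding A_def using inj_on_window_start[OF t(2) assms(2)]
    by (subst card_image) (auto intro: inj_on_subset)
  \<comment> \<open>A window outside A: the one starting at t1, or else the one just before all of A.\<close>
  obtain j where j: "j \<notin> A" "j \<in> W"
  proof (cases "t1 \<in> A")
    case False
    moreover have "t1 \<in> W" unfolding W_def using t assms(1) by (auto intro!: exI[of _ 0])
    ultimately show ?thesis using that by blast
  next
    case True
    then obtain k0 where k0: "k0 < b" "t1 = window_start n t2 k0" unfolding A_def by auto
    have "window_start n t2 0 = t2" using t(2) by (intro window_start_unique) auto
    then have "0 < k0" using k0 t(3) by (cases k0) auto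
    define j where "j = window_start n t2 b"
    have "j \<notin> A"
      using inj_on_window_start[OF t(2) assms(2)] unfolding A_def j_def inj_on_def by fastforce
    moreover have "j \<in> W"
    proof -
      have "((j + (b - k0)) mod n + k0) mod n = (j + b) mod n"
        using k0 by (simp add: mod_add_left_eq)
      then have "window_start n t2 k0 = (j + (b - k0)) mod n"
        using window_start_covers[OF t(2)] assms k0 unfolding j_def
        by (intro window_start_unique) auto
      moreover have "j < n" unfolding j_def using assms by (simp add: window_start_less)
      ultimately show ?thesis
        unfolding W_def using t k0 \<open>0 < k0\<close> by (auto intro!: exI[of _ "b - k0"])
    qed
    ultimately show ?thesis using that by blast
  qed
  have "b + 1 = card (insert j A)"
    using j card_A A_def by (simp add: card_insert_if)
  also have "\<dots> \<le> card W" using j A_sub \<open>finite W\<close> by (intro card_mono) auto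
  finally show ?thesis unfolding d_b_eq_card_windows W_def .
qed

lemma hamming_dist_ge_2_if_sum_eq:
  fixes u v :: "nat \<Rightarrow> 'a::ab_group_add"
  assumes "(\<Sum>j<n. u j) = (\<Sum>j<n. v j)" "t < n" "u t \<noteq> v t"
  shows "2 \<le> hamming_dist n u v"
proof (rule ccontr)
  assume "\<not> 2 \<le> hamming_dist n u v"
  then have "card {j. j < n \<and> u j \<noteq> v j} \<le> 1" unfolding hamming_dist_def by simp
  then have agree: "u j = v j" if "j < n" "j \<noteq> t" for j
    using that assms(2,3) by (auto simp: card_le_Suc0_iff_eq)
  have "0 = (\<Sum>j<n. u j - v j)" using assms(1) by (simp add: sum_subtractf)
  also have "\<dots> = (\<Sum>j<n. if j = t then u t - v t else 0)"
    by (rule sum.cong) (auto simp: agree)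
  also have "\<dots> = u t - v t" using assms(2) by simp
  finally show False using assms(3) by simp
qed

lemma degree_monom_one_sub_one:
  "1 \<le> n \<Longrightarrow> degree (monom 1 n - 1 :: 'a::field poly) = n"
  by (subst diff_conv_add_uminus, subst degree_add_eq_left) (auto simp: degree_monom_eq)

lemma poly_one_eq_zero_if_in_cyclic_code_poly:
  assumes "r \<in> cyclic_code_poly n i" "1 \<le> i"
  shows "poly r 1 = (0::'a::field)"
proof -
  obtain g where r: "r = ([:-1, 1:] ^ i * g) mod (monom 1 n - 1)"
    using assms(1) unfolding cyclic_code_poly_def by auto
  define a where "a = [:-1, 1:] ^ i * g"
  define M where "M = (monom 1 n - 1 :: 'a poly)"
  have "poly a 1 = 0" unfolding a_def using assms(2) by (simp add: power_0_left)
  moreover have "poly M 1 = 0" unfolding M_def by (simp add: poly_monom)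
  moreover have "poly a 1 = poly (a div M) 1 * poly M 1 + poly (a mod M) 1"
    by (metis div_mult_mod_eq poly_add poly_mult)
  moreover have "r = a mod M" using r unfolding a_def M_def .
  ultimately show ?thesis by simp
qed

lemma degree_less_if_in_cyclic_code_poly:
  assumes "r \<in> cyclic_code_poly n i" "1 \<le> n"
  shows "degree (r :: 'a::field poly) < n"
proof -
  obtain g where r: "r = ([:-1, 1:] ^ i * g) mod (monom 1 n - 1)"
    using assms(1) unfolding cyclic_code_poly_def by auto
  have deg: "degree (monom 1 n - 1 :: 'a poly) = n"
    using degree_monom_one_sub_one[OF assms(2)] .
  then have "monom 1 n - 1 \<noteq> (0 :: 'a poly)" using assms(2) by auto
  then show ?thesis
    using degree_mod_less[of "monom 1 n - 1" "[:-1, 1:] ^ i * g"] r deg assms(2) by fastforce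
qed

lemma sum_cyclic_code_eq_zero:
  assumes "c \<in> cyclic_code n i" "1 \<le> n" "1 \<le> i"
  shows "(\<Sum>j<n. c j) = (0::'a::field)"
proof -
  obtain r where r: "r \<in> cyclic_code_poly n i" "c = coeff_vec n r"
    using assms(1) unfolding cyclic_code_def by auto
  have "poly r 1 = (\<Sum>j<n. coeff r j)"
    using degree_less_if_in_cyclic_code_poly[OF r(1) assms(2)]
    by (auto simp: poly_altdef le_degree intro!: sum.mono_neutral_left)
  then show ?thesis
    using poly_one_eq_zero_if_in_cyclic_code_poly[OF r(1) assms(3)] r(2)
    by (simp add: coeff_vec_def)
qed

lemma cyclic_code_hamming_dist_ge_2:
  assumes "c \<in> cyclic_code n i" "c' \<in> cyclic_code n i" "c \<noteq> c'" "1 \<le> n" "1 \<le> i"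
  shows "2 \<le> hamming_dist n c (c' :: nat \<Rightarrow> 'a::field)"
proof -
  have "\<exists>t<n. c t \<noteq> c' t"
    using assms(1-3) unfolding cyclic_code_def coeff_vec_def by auto
  then show ?thesis
    using sum_cyclic_code_eq_zero[OF assms(1,4,5)] sum_cyclic_code_eq_zero[OF assms(2,4,5)]
    by (metis hamming_dist_ge_2_if_sum_eq)
qed

lemma CHAR_eq_if_card_prime_power:
  assumes "prime p" "CARD('a::{finite,field}) = p ^ m"
  shows "CHAR('a) = p"
proof -
  have "prime CHAR('a)" by (intro prime_CHAR_semidom finite_imp_CHAR_pos) simp
  moreover have "CHAR('a) dvd p ^ m" using CHAR_dvd_CARD[where 'a = 'a] assms(2) by simp
  ultimately show ?thesis
    using assms(1) prime_dvd_power primes_dvd_imp_eq by blast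
qed

lemma x_minus_one_power_CHAR_power:
  assumes "prime CHAR('a::field)"
  shows "([:-1, 1:] :: 'a poly) ^ (CHAR('a) ^ k) = monom 1 (CHAR('a) ^ k) - 1"
proof -
  have "([:-1, 1:] + 1 :: 'a poly) = monom 1 1" by (simp add: monom_Suc one_pCons)
  then have "monom 1 (CHAR('a) ^ k) = ([:-1, 1:] + 1 :: 'a poly) ^ (CHAR('a) ^ k)"
    by (simp add: monom_power)
  also have "\<dots> = [:-1, 1:] ^ (CHAR('a) ^ k) + 1"
    by (subst freshmans_dream') (use assms in auto)
  finally show ?thesis by (simp add: algebra_simps)
qed

lemma monom_sub_one_in_cyclic_code_poly:
  assumes "prime CHAR('a::field)" "i \<le> CHAR('a) ^ k" "CHAR('a) ^ k < n"
  shows "(monom 1 (CHAR('a) ^ k) - 1 :: 'a poly) \<in> cyclic_code_poly n i"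
proof -
  let ?q = "CHAR('a) ^ k"
  have "[:-1, 1:] ^ i * [:-1, 1:] ^ (?q - i) = (monom 1 ?q - 1 :: 'a poly)"
    using assms(2) x_minus_one_power_CHAR_power[OF assms(1)] by (simp flip: power_add)
  moreover have "1 \<le> ?q" using prime_gt_0_nat[OF assms(1)] by simp
  then have "(monom 1 ?q - 1 :: 'a poly) mod (monom 1 n - 1) = monom 1 ?q - 1"
    using assms(3) by (intro mod_poly_less) (simp add: degree_monom_one_sub_one)
  ultimately have
    "monom 1 ?q - 1 = ([:-1, 1:] ^ i * [:-1, 1:] ^ (?q - i)) mod (monom 1 n - 1 :: 'a poly)"
    by simp
  then show ?thesis unfolding cyclic_code_poly_def by blast
qed

lemma zero_in_cyclic_code: "(\<lambda>_. 0) \<in> cyclic_code n i"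
proof -
  have "0 \<in> cyclic_code_poly n i" unfolding cyclic_code_poly_def by (auto intro!: exI[of _ 0])
  then show ?thesis unfolding cyclic_code_def coeff_vec_def by (force intro: image_eqI)
qed

lemma hamming_dist_monom_sub_one:
  assumes "0 < q" "q < n"
  shows "hamming_dist n (coeff_vec n (monom 1 q - 1 :: 'a::field poly)) (\<lambda>_. 0) = 2"
proof -
  have "{j. j < n \<and> coeff_vec n (monom 1 q - 1 :: 'a poly) j \<noteq> 0} = {0, q}"
    using assms by (auto simp: coeff_vec_def coeff_monom)
  then show ?thesis using assms unfolding hamming_dist_def by simp
qed

lemma min_d_b_le:
  "c \<in> C \<Longrightarrow> c' \<in> C \<Longrightarrow> c \<noteq> c' \<Longrightarrow> min_d_b n b C \<le> d_b n b c c'"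
  unfolding min_d_b_def
  by (rule Min_le) (auto intro: finite_subset[of _ "{..n}"] simp: d_b_le)

lemma le_min_d_b:
  assumes "\<And>c c'. c \<in> C \<Longrightarrow> c' \<in> C \<Longrightarrow> c \<noteq> c' \<Longrightarrow> d \<le> d_b n b c c'"
    and "c \<in> C" "c' \<in> C" "c \<noteq> c'"
  shows "d \<le> min_d_b n b C"
  unfolding min_d_b_def using assms
  by (subst Min_ge_iff) (auto intro: finite_subset[of _ "{..n}"] simp: d_b_le)

theorem proposition2p6:
  fixes p m e b i :: nat
    and C :: "(nat \<Rightarrow> 'a::{finite,field}) set"
  assumes "prime p" and "m > 0" and "e > 0"
    and "CARD('a) = p ^ m"
    and "C = cyclic_code (p ^ e) i"
    and "2 \<le> b" and "b < p ^ e"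
    and "1 \<le> i" and "i \<le> p ^ (e - 1)"
  shows "b + 1 \<le> min_d_b (p ^ e) b C
       \<and> min_d_b (p ^ e) b C \<le> 2 * b"
proof -
  define q where "q = p ^ (e - 1)"
  have "1 < p" using assms(1) prime_gt_1_nat by blast
  then have q: "0 < q" "q < p ^ e"
    using assms(3) unfolding q_def by (simp_all add: power_strict_increasing)
  have char: "CHAR('a) = p" using CHAR_eq_if_card_prime_power assms(1,4) by blast
  define w where "w = coeff_vec (p ^ e) (monom 1 q - 1 :: 'a poly)"
  have "(monom 1 q - 1 :: 'a poly) \<in> cyclic_code_poly (p ^ e) i"
    using monom_sub_one_in_cyclic_code_poly[where 'a = 'a, of i "e - 1" "p ^ e"] assms(1,9) q
    unfolding char q_def by simp
  then have w: "w \<in> C" unfolding assms(5) cyclic_code_def w_def by blast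
  have z: "(\<lambda>_. 0) \<in> C" unfolding assms(5) by (rule zero_in_cyclic_code)
  have dist_w: "hamming_dist (p ^ e) w (\<lambda>_. 0) = 2"
    unfolding w_def by (rule hamming_dist_monom_sub_one[OF q])
  then have wz: "w \<noteq> (\<lambda>_. 0)" by (auto simp: hamming_dist_def)
  have "min_d_b (p ^ e) b C \<le> d_b (p ^ e) b w (\<lambda>_. 0)" by (rule min_d_b_le[OF w z wz])
  also have "\<dots> \<le> b * hamming_dist (p ^ e) w (\<lambda>_. 0)"
    using assms(7) by (intro d_b_le_mult_hamming_dist) simp
  finally have "min_d_b (p ^ e) b C \<le> 2 * b" using dist_w by simp
  moreover have "b + 1 \<le> min_d_b (p ^ e) b C"
  proof (rule le_min_d_b[OF _ w z wz])
    fix c c' assume "c \<in> C" "c' \<in> C" "c \<noteq> c'"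
    then show "b + 1 \<le> d_b (p ^ e) b c c'"
      using assms(5-8) q by (intro d_b_ge_Suc cyclic_code_hamming_dist_ge_2) auto
  qed
  ultimately show ?thesis by simp
qed

end
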